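(* Let $X_1,\dots,X_n$ be Polish spaces with Borel probability measures $\mu_i$, let $\mu=\prod_{i=1}^n\mu_i$ on $X=\prod_iX_i$, and let $c:X\to\mathbb{R}$ be Borel measurable with $c\in L^1(X,\mu)$. For $y\in X$ and $\alpha\subseteq\{1,\dots,n\}$ let $c_\alpha(x_\alpha)=c(x_\alpha y_{\{1,\dots,n\}\setminus\alpha})$ on $X_\alpha$. Then there exists $y\in X$ such that for every $\alpha\subseteq\{1,\dots,n\}$ the function $c_\alpha$ is integrable with respect to $\mu_\alpha=\prod_{i\in\alpha}\mu_i$ and $\|c_\alpha\|_{L^1(\mu_\alpha)}\le 2^{n+1}\|c\|_{L^1(\mu)}$ (for $\alpha=\varnothing$ this means $|c(y)|\le2^{n+1}\|c\|_{L^1(\mu)}$).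
   Context: $X_\alpha=\prod_{i\in\alpha}X_i$; for disjoint $\alpha,\beta$, $x_\alpha y_\beta$ denotes the point of $X_{\alpha\sqcup\beta}$ whose coordinates are taken from $x_\alpha$ and $y_\beta$. *)

theory Defs
  imports "HOL-Probability.Probability"
begin

definition Polish_space :: "'a topology \<Rightarrow> bool" where
  "Polish_space X \<longleftrightarrow> completely_metrizable_space X \<and> separable_space X"

definition borel_of :: "'a topology \<Rightarrow> 'a measure" where
  "borel_of X = sigma (topspace X) {U. openin X U}"

end

theory Submission
  imports Defs
begin

text \<open>
  Put \<open>g = \<bar>c\<bar>\<close> and, for \<open>\<alpha> \<subseteq> N\<close>, let \<open>G\<^sub>\<alpha> y\<close> be the integral of \<open>g\<close> over the
  coordinates in \<open>\<alpha>\<close> with the remaining coordinates frozen at \<open>y\<close>.  By Fubini every \<open>G\<^sub>\<alpha>\<close>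
  has the same integral as \<open>g\<close>, so \<open>\<Sum>\<^sub>\<alpha> G\<^sub>\<alpha>\<close> has integral \<open>2\<^sup>|\<^sup>N\<^sup>| \<parallel>c\<parallel>\<^sub>1\<close>.  On a
  probability space a function is somewhere at most its integral; at such a point \<open>y\<close>
  every single \<open>G\<^sub>\<alpha> y\<close> is bounded by \<open>2\<^sup>|\<^sup>N\<^sup>| \<parallel>c\<parallel>\<^sub>1\<close>.
\<close>

lemma (in prob_space) exists_le_nn_integral:
  assumes [measurable]: "f \<in> borel_measurable M"
  shows "\<exists>x\<in>space M. f x \<le> (\<integral>\<^sup>+x. f x \<partial>M)"
proof (rule ccontr)
  assume "\<not> ?thesis"
  then have less: "\<And>x. x \<in> space M \<Longrightarrow> (\<integral>\<^sup>+x. f x \<partial>M) < f x"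
    by (auto simp: not_le)
  obtain x where "x \<in> space M"
    using not_empty by blast
  then have fin: "(\<integral>\<^sup>+x. f x \<partial>M) \<noteq> \<infinity>"
    using less top.not_eq_extremum by fastforce
  have "(\<integral>\<^sup>+_. (\<integral>\<^sup>+x. f x \<partial>M) \<partial>M) < (\<integral>\<^sup>+x. f x \<partial>M)"
  proof (rule nn_integral_less)
    show "AE x in M. (\<integral>\<^sup>+x. f x \<partial>M) \<le> f x"
      using less by (auto intro: less_imp_le)
    show "\<not> (AE x in M. f x \<le> (\<integral>\<^sup>+x. f x \<partial>M))"
    proof
      assume "AE x in M. f x \<le> (\<integral>\<^sup>+x. f x \<partial>M)"
      then have "AE x in M. False"
        by (rule AE_mp) (use less in \<open>auto intro!: AE_I2 simp: not_le\<close>)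
      then show False
        by (simp add: AE_False)
    qed
  qed (use fin in \<open>auto simp: emeasure_space_1\<close>)
  then show False
    by (simp add: emeasure_space_1)
qed

lemma measurable_merge_slice:
  assumes "\<alpha> \<subseteq> N" and y: "y \<in> space (PiM N M)"
  shows "(\<lambda>x. merge \<alpha> (N - \<alpha>) (x, y)) \<in> measurable (PiM \<alpha> M) (PiM N M)"
proof -
  have [measurable]: "merge \<alpha> (N - \<alpha>) \<in> measurable (PiM \<alpha> M \<Otimes>\<^sub>M PiM (N - \<alpha>) M) (PiM N M)"
    using measurable_merge[of \<alpha> "N - \<alpha>" M] \<open>\<alpha> \<subseteq> N\<close> by (simp add: Un_absorb1)
  have "restrict y (N - \<alpha>) \<in> space (PiM (N - \<alpha>) M)"
    by (rule measurable_space[OF measurable_restrict_subset y]) auto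
  then have "(\<lambda>x. merge \<alpha> (N - \<alpha>) (x, restrict y (N - \<alpha>))) \<in> measurable (PiM \<alpha> M) (PiM N M)"
    by measurable
  then show ?thesis
    by simp
qed

lemma integrable_merge_slice:
  fixes c :: "('i \<Rightarrow> 'a) \<Rightarrow> real"
  assumes "\<alpha> \<subseteq> N" "y \<in> space (PiM N M)" "0 \<le> B"
    and c: "c \<in> borel_measurable (PiM N M)"
    and bound: "(\<integral>\<^sup>+x. ennreal \<bar>c (merge \<alpha> (N - \<alpha>) (x, y))\<bar> \<partial>PiM \<alpha> M) \<le> ennreal B"
  shows "integrable (PiM \<alpha> M) (\<lambda>x. c (merge \<alpha> (N - \<alpha>) (x, y)))"
    and "(\<integral>x. \<bar>c (merge \<alpha> (N - \<alpha>) (x, y))\<bar> \<partial>PiM \<alpha> M) \<le> B"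
proof -
  have [measurable]: "(\<lambda>x. c (merge \<alpha> (N - \<alpha>) (x, y))) \<in> borel_measurable (PiM \<alpha> M)"
    using measurable_comp[OF measurable_merge_slice[OF assms(1,2)] c] by (simp add: comp_def)
  show "integrable (PiM \<alpha> M) (\<lambda>x. c (merge \<alpha> (N - \<alpha>) (x, y)))"
    using order.strict_trans1[OF bound ennreal_less_top]
    by (intro integrableI_bounded) (simp_all add: infinity_ennreal_def)
  have "(\<integral>x. \<bar>c (merge \<alpha> (N - \<alpha>) (x, y))\<bar> \<partial>PiM \<alpha> M)
      = enn2real (\<integral>\<^sup>+x. ennreal \<bar>c (merge \<alpha> (N - \<alpha>) (x, y))\<bar> \<partial>PiM \<alpha> M)"
    by (rule integral_eq_nn_integral) auto
  also have "\<dots> \<le> B"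
    using enn2real_mono[OF bound] \<open>0 \<le> B\<close> by simp
  finally show "(\<integral>x. \<bar>c (merge \<alpha> (N - \<alpha>) (x, y))\<bar> \<partial>PiM \<alpha> M) \<le> B" .
qed

context product_prob_space
begin

lemma borel_measurable_nn_integral_merge:
  assumes "\<alpha> \<subseteq> N" and [measurable]: "f \<in> borel_measurable (PiM N M)"
  shows "(\<lambda>y. \<integral>\<^sup>+x. f (merge \<alpha> (N - \<alpha>) (x, y)) \<partial>PiM \<alpha> M) \<in> borel_measurable (PiM N M)"
proof -
  interpret A: product_prob_space M \<alpha> by unfold_locales
  have [measurable]: "merge \<alpha> (N - \<alpha>) \<in> measurable (PiM \<alpha> M \<Otimes>\<^sub>M PiM (N - \<alpha>) M) (PiM N M)"
    using measurable_merge[of \<alpha> "N - \<alpha>" M] \<open>\<alpha> \<subseteq> N\<close> by (simp add: Un_absorb1)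
  have [measurable]: "(\<lambda>y. restrict y (N - \<alpha>)) \<in> measurable (PiM N M) (PiM (N - \<alpha>) M)"
    by (rule measurable_restrict_subset) auto
  have "(\<lambda>(y, x). f (merge \<alpha> (N - \<alpha>) (x, restrict y (N - \<alpha>))))
      \<in> borel_measurable (PiM N M \<Otimes>\<^sub>M PiM \<alpha> M)"
    by measurable
  then have "(\<lambda>y. \<integral>\<^sup>+x. f (merge \<alpha> (N - \<alpha>) (x, restrict y (N - \<alpha>))) \<partial>PiM \<alpha> M)
      \<in> borel_measurable (PiM N M)"
    using A.P.borel_measurable_nn_integral_fst by fastforce
  then show ?thesis
    by simp
qed

text \<open>
  Integrating out the \<open>\<alpha>\<close>-coordinates gives a function of the \<open>(N - \<alpha>)\<close>-coordinates alone,
  so the outer integral over the \<open>\<alpha>\<close>-coordinates is trivial (they carry a probability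
  measure) and what remains is Fubini for \<open>PiM N M = PiM (N - \<alpha>) M \<Otimes> PiM \<alpha> M\<close>.
\<close>
lemma nn_integral_nn_integral_merge:
  assumes "finite N" "\<alpha> \<subseteq> N" and g[measurable]: "g \<in> borel_measurable (PiM N M)"
  shows "(\<integral>\<^sup>+y. (\<integral>\<^sup>+x. g (merge \<alpha> (N - \<alpha>) (x, y)) \<partial>PiM \<alpha> M) \<partial>PiM N M)
       = (\<integral>\<^sup>+y. g y \<partial>PiM N M)"
proof -
  interpret A: product_prob_space M \<alpha> by unfold_locales
  define \<beta> where "\<beta> = N - \<alpha>"
  have N: "N = \<beta> \<union> \<alpha>" and disj: "\<beta> \<inter> \<alpha> = {}"
    using \<open>\<alpha> \<subseteq> N\<close> by (auto simp: \<beta>_def)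
  have fin: "finite \<alpha>" "finite \<beta>"
    using \<open>finite N\<close> \<open>\<alpha> \<subseteq> N\<close> finite_subset by (auto simp: \<beta>_def)
  define G where "G y = (\<integral>\<^sup>+x. g (merge \<alpha> \<beta> (x, y)) \<partial>PiM \<alpha> M)" for y
  have "G \<in> borel_measurable (PiM N M)"
    using borel_measurable_nn_integral_merge[OF \<open>\<alpha> \<subseteq> N\<close> g, folded \<beta>_def]
    unfolding G_def .
  then have G: "G \<in> borel_measurable (PiM (\<beta> \<union> \<alpha>) M)"
    by (simp only: N)
  have g': "g \<in> borel_measurable (PiM (\<beta> \<union> \<alpha>) M)"
    using g by (simp only: N)
  have G_merge: "G (merge \<beta> \<alpha> (y, x')) = G y" for y x'
  proof -
    have "merge \<alpha> \<beta> (x, merge \<beta> \<alpha> (y, x')) = merge \<alpha> \<beta> (x, y)" for x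
      by (auto simp: merge_def fun_eq_iff)
    then show ?thesis
      by (simp add: G_def)
  qed
  have "(\<integral>\<^sup>+y. G y \<partial>PiM (\<beta> \<union> \<alpha>) M)
      = (\<integral>\<^sup>+y. (\<integral>\<^sup>+x'. G (merge \<beta> \<alpha> (y, x')) \<partial>PiM \<alpha> M) \<partial>PiM \<beta> M)"
    by (rule product_nn_integral_fold[OF disj fin(2,1) G])
  also have "\<dots> = (\<integral>\<^sup>+y. G y \<partial>PiM \<beta> M)"
    by (simp add: G_merge A.P.emeasure_space_1)
  also have "\<dots> = (\<integral>\<^sup>+y. (\<integral>\<^sup>+x. g (merge \<beta> \<alpha> (y, x)) \<partial>PiM \<alpha> M) \<partial>PiM \<beta> M)"
    by (simp add: G_def merge_commute[OF disj])
  also have "\<dots> = (\<integral>\<^sup>+y. g y \<partial>PiM (\<beta> \<union> \<alpha>) M)"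
    by (rule product_nn_integral_fold[OF disj fin(2,1) g', symmetric])
  finally have "(\<integral>\<^sup>+y. G y \<partial>PiM N M) = (\<integral>\<^sup>+y. g y \<partial>PiM N M)"
    by (simp only: N)
  then show ?thesis
    by (simp only: G_def \<beta>_def)
qed

lemma exists_point_integrable_slices:
  fixes c :: "('i \<Rightarrow> 'a) \<Rightarrow> real"
  assumes N: "finite N" and c: "integrable (PiM N M) c"
  shows "\<exists>y\<in>space (PiM N M). \<forall>\<alpha>\<subseteq>N.
           integrable (PiM \<alpha> M) (\<lambda>x. c (merge \<alpha> (N - \<alpha>) (x, y)))
         \<and> (\<integral>x. \<bar>c (merge \<alpha> (N - \<alpha>) (x, y))\<bar> \<partial>PiM \<alpha> M) \<le> 2 ^ card N * (\<integral>x. \<bar>c x\<bar> \<partial>PiM N M)"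
proof -
  interpret P: product_prob_space M N by unfold_locales
  have [measurable]: "c \<in> borel_measurable (PiM N M)"
    using c by auto
  define C where "C = (\<integral>x. \<bar>c x\<bar> \<partial>PiM N M)"
  define B where "B = 2 ^ card N * C"
  have "0 \<le> C"
    by (simp add: C_def)
  then have "0 \<le> B"
    by (simp add: B_def)
  define G where "G \<alpha> y = (\<integral>\<^sup>+x. ennreal \<bar>c (merge \<alpha> (N - \<alpha>) (x, y))\<bar> \<partial>PiM \<alpha> M)" for \<alpha> y
  have G_measurable: "G \<alpha> \<in> borel_measurable (PiM N M)" if "\<alpha> \<in> Pow N" for \<alpha>
    unfolding G_def by (rule borel_measurable_nn_integral_merge) (use that in auto)
  have G_integral: "(\<integral>\<^sup>+y. G \<alpha> y \<partial>PiM N M) = ennreal C" if "\<alpha> \<in> Pow N" for \<alpha>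
  proof -
    have "(\<integral>\<^sup>+y. G \<alpha> y \<partial>PiM N M) = (\<integral>\<^sup>+x. ennreal \<bar>c x\<bar> \<partial>PiM N M)"
      using that unfolding G_def by (intro nn_integral_nn_integral_merge[OF N]) auto
    also have "\<dots> = ennreal C"
      unfolding C_def by (rule nn_integral_eq_integral) (auto intro: integrable_abs c)
    finally show ?thesis .
  qed
  have "(\<integral>\<^sup>+y. (\<Sum>\<alpha>\<in>Pow N. G \<alpha> y) \<partial>PiM N M) = (\<Sum>\<alpha>\<in>Pow N. \<integral>\<^sup>+y. G \<alpha> y \<partial>PiM N M)"
    by (rule nn_integral_sum) (use G_measurable in auto)
  also have "\<dots> = of_nat (2 ^ card N) * ennreal C"
    by (simp add: G_integral card_Pow N)
  also have "\<dots> = ennreal B"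
    using \<open>0 \<le> C\<close> by (simp add: B_def ennreal_mult ennreal_power[symmetric])
  finally have "(\<integral>\<^sup>+y. (\<Sum>\<alpha>\<in>Pow N. G \<alpha> y) \<partial>PiM N M) = ennreal B" .
  then obtain y where y: "y \<in> space (PiM N M)" and sum_le: "(\<Sum>\<alpha>\<in>Pow N. G \<alpha> y) \<le> ennreal B"
    using P.P.exists_le_nn_integral[of "\<lambda>y. \<Sum>\<alpha>\<in>Pow N. G \<alpha> y"] G_measurable by auto
  have "G \<alpha> y \<le> ennreal B" if "\<alpha> \<subseteq> N" for \<alpha>
    using member_le_sum[of \<alpha> "Pow N" "\<lambda>\<alpha>. G \<alpha> y"] that N sum_le by auto
  then have "\<forall>\<alpha>\<subseteq>N. integrable (PiM \<alpha> M) (\<lambda>x. c (merge \<alpha> (N - \<alpha>) (x, y)))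
      \<and> (\<integral>x. \<bar>c (merge \<alpha> (N - \<alpha>) (x, y))\<bar> \<partial>PiM \<alpha> M) \<le> B"
    using y \<open>0 \<le> B\<close> integrable_merge_slice[of _ N y M B c] by (simp add: G_def)
  then show ?thesis
    using y unfolding B_def C_def by blast
qed

end

theorem mainTheorem9:
  fixes n :: nat
    and T :: "nat \<Rightarrow> 'a topology"
    and M :: "nat \<Rightarrow> 'a measure"
    and c :: "(nat \<Rightarrow> 'a) \<Rightarrow> real"
  assumes polish: "\<And>i. i \<in> {1..n} \<Longrightarrow> Polish_space (T i)"
    and borel: "\<And>i. i \<in> {1..n} \<Longrightarrow> sets (M i) = sets (borel_of (T i))"
    and prob: "\<And>i. i \<in> {1..n} \<Longrightarrow> prob_space (M i)"
    and meas: "c \<in> borel_measurable (PiM {1..n} M)"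
    and int: "integrable (PiM {1..n} M) c"
  shows "\<exists>y \<in> space (PiM {1..n} M). \<forall>\<alpha> \<subseteq> {1..n}.
           integrable (PiM \<alpha> M) (\<lambda>x. c (merge \<alpha> ({1..n} - \<alpha>) (x, y)))
         \<and> (\<integral>x. \<bar>c (merge \<alpha> ({1..n} - \<alpha>) (x, y))\<bar> \<partial>PiM \<alpha> M)
             \<le> 2 ^ (n + 1) * (\<integral>x. \<bar>c x\<bar> \<partial>PiM {1..n} M)"
proof -
  define I where "I = {1..n}"
  \<comment> \<open>The locale needs a probability measure at every index, also outside \<open>I\<close>.\<close>
  define M' where "M' i = (if i \<in> I then M i else return (count_space UNIV) undefined)" for i
  interpret product_prob_space M'
    by (rule product_prob_spaceI) (auto simp: M'_def I_def prob intro: prob_space_return)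
  have PiM_M': "\<alpha> \<subseteq> I \<Longrightarrow> PiM \<alpha> M' = PiM \<alpha> M" for \<alpha>
    by (rule PiM_cong) (auto simp: M'_def)
  obtain y where y: "y \<in> space (PiM I M)" and slices: "\<And>\<alpha>. \<alpha> \<subseteq> I \<Longrightarrow>
      integrable (PiM \<alpha> M) (\<lambda>x. c (merge \<alpha> (I - \<alpha>) (x, y)))
    \<and> (\<integral>x. \<bar>c (merge \<alpha> (I - \<alpha>) (x, y))\<bar> \<partial>PiM \<alpha> M) \<le> 2 ^ card I * (\<integral>x. \<bar>c x\<bar> \<partial>PiM I M)"
    using exists_point_integrable_slices[of I c] int PiM_M' by (auto simp: I_def)
  have "(2::real) ^ card I * (\<integral>x. \<bar>c x\<bar> \<partial>PiM I M) \<le> 2 ^ (n + 1) * (\<integral>x. \<bar>c x\<bar> \<partial>PiM I M)"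
    by (intro mult_right_mono) (auto simp: I_def)
  then show ?thesis
    using y slices unfolding I_def[symmetric] by (blast intro: order_trans)
qed

end
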